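(* Let $n\ge 2$, $d\ge1$, and $p\in\mathcal H(n,d)$, and put $N=N(p)$. Suppose $p$ contains (with nonzero coefficient) a monomial of degree $d$ that depends on at most two of the variables (i.e. of the form $x_i^d$ or $x_i^a x_j^b$ with $a+b=d$). Then $$ d\le\frac{2N-3}{2n-3}. $$
   Context: $\mathcal H(n,d)$ is the set of real polynomials in $x_1,\dots,x_n$ of total degree exactly $d$, with all coefficients nonnegative, such that $p(x)=1$ whenever $\sum_{j=1}^n x_j=1$. $N(p)$ denotes the number of distinct monomials occurring with nonzero coefficient in $p$. *)

theory Defs
  imports Complex_Main
begin

text \<open>A real polynomial in the variables x_0,...,x_(n-1) is represented by its coefficient
  function c on exponent vectors alpha :: nat => nat (alpha i = exponent of x_i);
  admissible exponent vectors vanish at all indices >= n, and c has finite support.\<close>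

definition mon_support :: "((nat \<Rightarrow> nat) \<Rightarrow> real) \<Rightarrow> (nat \<Rightarrow> nat) set" where
  "mon_support c = {\<alpha>. c \<alpha> \<noteq> 0}"

definition mon_deg :: "nat \<Rightarrow> (nat \<Rightarrow> nat) \<Rightarrow> nat" where
  "mon_deg n \<alpha> = (\<Sum>i<n. \<alpha> i)"

definition is_poly :: "nat \<Rightarrow> ((nat \<Rightarrow> nat) \<Rightarrow> real) \<Rightarrow> bool" where
  "is_poly n c \<longleftrightarrow> finite (mon_support c) \<and> (\<forall>\<alpha>\<in>mon_support c. \<forall>i\<ge>n. \<alpha> i = 0)"

definition poly_eval :: "nat \<Rightarrow> ((nat \<Rightarrow> nat) \<Rightarrow> real) \<Rightarrow> (nat \<Rightarrow> real) \<Rightarrow> real" where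
  "poly_eval n c x = (\<Sum>\<alpha>\<in>mon_support c. c \<alpha> * (\<Prod>i<n. x i ^ \<alpha> i))"

definition total_degree_eq :: "nat \<Rightarrow> ((nat \<Rightarrow> nat) \<Rightarrow> real) \<Rightarrow> nat \<Rightarrow> bool" where
  "total_degree_eq n c d \<longleftrightarrow> (\<exists>\<alpha>\<in>mon_support c. mon_deg n \<alpha> = d)
      \<and> (\<forall>\<alpha>\<in>mon_support c. mon_deg n \<alpha> \<le> d)"

definition Hcal :: "nat \<Rightarrow> nat \<Rightarrow> ((nat \<Rightarrow> nat) \<Rightarrow> real) set" where
  "Hcal n d = {c. is_poly n c \<and> total_degree_eq n c d \<and> (\<forall>\<alpha>. c \<alpha> \<ge> 0)
      \<and> (\<forall>x. (\<Sum>j<n. x j) = 1 \<longrightarrow> poly_eval n c x = 1)}"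

definition num_monomials :: "((nat \<Rightarrow> nat) \<Rightarrow> real) \<Rightarrow> nat" where
  "num_monomials c = card (mon_support c)"

end

theory Submission
  imports Defs "HOL-Combinatorics.Transposition"
begin

text \<open>Let \<open>D = 2 n - 3\<close>. The Lucas polynomial identity \<open>L\<^sub>D(x, 1 - x) + (1 - x) ^ D = 1\<close> writes
  \<open>1\<close> as a sum of \<open>n\<close> monomials \<open>K\<^sub>i x ^ U\<^sub>i (1 - x) ^ V\<^sub>i\<close> of degree at most \<open>D\<close> with positive
  coefficients, two of which are \<open>x ^ D\<close> and \<open>(1 - x) ^ D\<close>. Substituting these monomials for the
  variables of \<open>p\<close>, the two variables of the given top monomial going to \<open>x ^ D\<close> and
  \<open>(1 - x) ^ D\<close>, yields a bivariate polynomial \<open>f(x, y)\<close> of degree \<open>D d\<close> with nonnegative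
  coefficients and at most \<open>N(p)\<close> monomials which equals \<open>1\<close> on \<open>x + y = 1\<close>.

  For such an \<open>f\<close> of degree \<open>E \<ge> 1\<close> we show \<open>E + 3 \<le> 2 N(f)\<close>. Put \<open>t = x / y\<close> and let \<open>f\<^sub>k\<close>
  be the homogeneous parts of \<open>f\<close>. The remainders \<open>Q\<^sub>k = (1 + t) ^ k - \<Sum>\<^sub>j\<^sub>\<le>\<^sub>k (1 + t) ^ (k - j) f\<^sub>j(t, 1)\<close>
  satisfy \<open>Q\<^sub>k\<^sub>+\<^sub>1 = (1 + t) Q\<^sub>k - f\<^sub>k\<^sub>+\<^sub>1(t, 1)\<close> and \<open>Q\<^sub>E = 0\<close>. Multiplication by \<open>1 + t\<close> creates no
  sign changes and subtracting a polynomial with \<open>m\<close> terms creates at most \<open>2 m\<close>, so \<open>Q\<^sub>E\<^sub>-\<^sub>1\<close> has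
  at most \<open>2 (N(f\<^sub>1) + \<dots> + N(f\<^sub>E\<^sub>-\<^sub>1))\<close> sign changes. On the other hand
  \<open>f\<^sub>E(t, 1) = (1 + t) Q\<^sub>E\<^sub>-\<^sub>1\<close> has nonnegative coefficients, hence at least \<open>E + 1 - N(f\<^sub>E)\<close> sign
  changes when zeros may count with either sign, and \<open>N(f\<^sub>E) \<ge> 2\<close>.\<close>

section \<open>Weak sign changes of coefficient sequences\<close>

definition alternating_chain :: "(nat \<Rightarrow> real) \<Rightarrow> (nat \<Rightarrow> nat) \<Rightarrow> nat \<Rightarrow> nat \<Rightarrow> bool" where
  "alternating_chain q ks s m \<longleftrightarrow>
     (\<forall>j<m. ks j < ks (Suc j)) \<and> (\<forall>j\<le>m. 0 \<le> (-1) ^ (s + j) * q (ks j))"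

text \<open>\<open>sign_alternation q L m\<close>: the coefficients \<open>q 0, \<dots>, q (L - 1)\<close> show at least \<open>m\<close> sign
  changes when each zero may be counted with either sign.\<close>

definition sign_alternation :: "(nat \<Rightarrow> real) \<Rightarrow> nat \<Rightarrow> nat \<Rightarrow> bool" where
  "sign_alternation q L m \<longleftrightarrow> (\<exists>ks s. alternating_chain q ks s m \<and> ks m < L)"

lemma chain_less:
  assumes "\<forall>j<m. ks j < ks (Suc j)" "i < i'" "i' \<le> m"
  shows "(ks i :: nat) < ks i'"
  using assms by (induction i') (auto simp: less_Suc_eq intro: less_trans)

lemma chain_le:
  assumes "\<forall>j<m. ks j < ks (Suc j)" "i \<le> i'" "i' \<le> m"
  shows "(ks i :: nat) \<le> ks i'"
  using chain_less[OF assms(1) _ assms(3), of i] assms(2) by (cases "i = i'") auto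

lemma chain_ge_index:
  assumes "\<forall>j<m. ks j < ks (Suc j)" "i \<le> m"
  shows "i \<le> (ks i :: nat)"
  using assms by (induction i) (auto simp: Suc_le_eq intro: le_less_trans)

lemma sign_alternation_less:
  assumes "sign_alternation q L m" shows "m < L"
proof -
  obtain ks s where "\<forall>j<m. ks j < ks (Suc j)" "ks m < L"
    using assms unfolding sign_alternation_def alternating_chain_def by blast
  then show ?thesis using chain_ge_index[of m ks m] by simp
qed

lemma sign_alternation_0:
  assumes "0 < L" shows "sign_alternation q L 0"
proof -
  define s :: nat where "s = (if 0 \<le> q 0 then 0 else 1)"
  have "alternating_chain q (\<lambda>_. 0) s 0"
    unfolding alternating_chain_def s_def by simp
  then show ?thesis unfolding sign_alternation_def using assms by blast
qed

lemma sign_alternation_mono: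
  assumes "sign_alternation q L m" "m' \<le> m"
  shows "sign_alternation q L m'"
proof -
  obtain ks s where chain: "alternating_chain q ks s m" and "ks m < L"
    using assms(1) unfolding sign_alternation_def by blast
  then have "alternating_chain q ks s m'"
    using assms(2) unfolding alternating_chain_def by simp
  moreover have "ks m' \<le> ks m"
    using chain chain_le assms(2) unfolding alternating_chain_def by blast
  ultimately show ?thesis
    using \<open>ks m < L\<close> unfolding sign_alternation_def by (meson le_less_trans)
qed

lemma alternating_chain_drop_two:
  assumes chain: "alternating_chain q' ks s m" and r: "Suc r \<le> m" and m: "2 \<le> m"
    and agree: "\<forall>i. i \<noteq> ks r \<and> i \<noteq> ks (Suc r) \<longrightarrow> q i = q' i"
  defines "ks' \<equiv> \<lambda>j. if j < r then ks j else ks (j + 2)"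
  shows "alternating_chain q ks' s (m - 2)" and "ks' (m - 2) \<le> ks m"
proof -
  have incr: "\<forall>j<m. ks j < ks (Suc j)" and signs: "\<forall>j\<le>m. 0 \<le> (-1) ^ (s + j) * q' (ks j)"
    using chain unfolding alternating_chain_def by auto
  show "ks' (m - 2) \<le> ks m"
    using chain_le[OF incr, of "m - 2" m] m unfolding ks'_def by (simp add: Suc_diff_Suc numeral_2_eq_2)
  have "q (ks' j) = q' (ks' j)" if "j \<le> m - 2" for j
  proof -
    have "ks r < ks (Suc r)" "j + 2 \<le> m"
      using incr r m that by auto
    then have "ks' j \<noteq> ks r \<and> ks' j \<noteq> ks (Suc r)"
      using chain_less[OF incr, of j r] chain_less[OF incr, of "Suc r" "j + 2"] r m
      unfolding ks'_def by (cases "j < r") auto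
    then show ?thesis
      using agree by blast
  qed
  moreover have "0 \<le> (-1) ^ (s + j) * q' (ks' j)" if "j \<le> m - 2" for j
    using signs[rule_format, of "j + 2"] signs[rule_format, of j] that m
    unfolding ks'_def by (auto simp: power_add)
  moreover have "ks' j < ks' (Suc j)" if "j < m - 2" for j
    using chain_less[OF incr, of j "j + 3"] incr that unfolding ks'_def
    by (auto simp: numeral_3_eq_3)
  ultimately show "alternating_chain q ks' s (m - 2)"
    unfolding alternating_chain_def by simp
qed

lemma sign_alternation_update:
  assumes "sign_alternation q' L m" "\<forall>i. i \<noteq> c \<longrightarrow> q i = q' i"
  shows "sign_alternation q L (m - 2)"
proof -
  obtain ks s where chain: "alternating_chain q' ks s m" and "ks m < L"
    using assms(1) unfolding sign_alternation_def by blast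
  consider "m < 2" | "\<forall>j\<le>m. ks j \<noteq> c" | j where "j \<le> m" "ks j = c" "2 \<le> m"
    by force
  then show ?thesis
  proof cases
    case 1
    then show ?thesis
      using sign_alternation_0 \<open>ks m < L\<close> by simp
  next
    case 2
    then have "alternating_chain q ks s m"
      using chain assms(2) unfolding alternating_chain_def by simp
    then have "sign_alternation q L m"
      using \<open>ks m < L\<close> unfolding sign_alternation_def by blast
    then show ?thesis
      by (rule sign_alternation_mono) simp
  next
    case 3
    define r where "r = min j (m - 1)"
    have r: "Suc r \<le> m" "c = ks r \<or> c = ks (Suc r)"
      using 3 unfolding r_def by (auto simp: min_def intro: arg_cong[of _ _ ks])
    then have "\<forall>i. i \<noteq> ks r \<and> i \<noteq> ks (Suc r) \<longrightarrow> q i = q' i"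
      using assms(2) by auto
    note drop = alternating_chain_drop_two[OF chain r(1) \<open>2 \<le> m\<close> this]
    then show ?thesis
      using \<open>ks m < L\<close> unfolding sign_alternation_def by (meson le_less_trans)
  qed
qed

lemma sign_alternation_modify:
  assumes "finite E" "sign_alternation q' L m" "\<forall>i. i \<notin> E \<longrightarrow> q i = q' i"
  shows "sign_alternation q L (m - 2 * card E)"
  using assms
proof (induction E arbitrary: q' m rule: finite_induct)
  case empty
  then have "q = q'" by auto
  then show ?case using empty by simp
next
  case (insert c E)
  let ?q'' = "\<lambda>i. if i = c then q i else q' i"
  have "sign_alternation ?q'' L (m - 2)"
    by (rule sign_alternation_update[OF insert.prems(1), where c = c]) simp
  moreover have "\<forall>i. i \<notin> E \<longrightarrow> q i = ?q'' i"
    using insert.prems(2) by simp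
  ultimately have "sign_alternation q L (m - 2 - 2 * card E)"
    by (rule insert.IH)
  then show ?case
    using insert.hyps by (simp add: diff_diff_add)
qed

text \<open>All zero coefficients together with one positive coefficient form an alternating
  chain.\<close>

lemma sign_alternation_nonneg:
  assumes nonneg: "\<forall>i. 0 \<le> q i" and i0: "i0 < L" "q i0 \<noteq> 0"
  shows "sign_alternation q L (L - card {i. i < L \<and> q i \<noteq> 0})"
proof -
  define m where "m = L - card {i. i < L \<and> q i \<noteq> 0}"
  define A where "A = insert i0 {i. i < L \<and> q i = 0}"
  define xs where "xs = sorted_list_of_set A"
  have A_less: "\<forall>a\<in>A. a < L"
    using i0 unfolding A_def by auto
  then have finite_A: "finite A"
    by (meson finite_nat_set_iff_bounded)
  have "card {i. i < L \<and> q i = 0} + card {i. i < L \<and> q i \<noteq> 0}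
      = card ({i. i < L \<and> q i = 0} \<union> {i. i < L \<and> q i \<noteq> 0})"
    by (rule card_Un_disjoint[symmetric]) auto
  also have "{i. i < L \<and> q i = 0} \<union> {i. i < L \<and> q i \<noteq> 0} = {..<L}"
    by auto
  finally have "card {i. i < L \<and> q i = 0} + card {i. i < L \<and> q i \<noteq> 0} = L"
    by simp
  then have "card A = Suc m"
    using i0 unfolding A_def m_def by simp
  then have len: "length xs = Suc m"
    unfolding xs_def by simp
  have set_xs: "set xs = A" and dist: "distinct xs" and sorted: "sorted_wrt (<) xs"
    using finite_A unfolding xs_def by (simp_all add: strict_sorted_list_of_set)
  obtain p where p: "p < length xs" "xs ! p = i0"
    using set_xs by (metis A_def in_set_conv_nth insertI1)
  have "alternating_chain q ((!) xs) p m"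
    unfolding alternating_chain_def
  proof (intro conjI allI impI)
    fix j assume "j < m"
    then show "xs ! j < xs ! Suc j"
      using sorted_wrt_nth_less[OF sorted] len by simp
  next
    fix j assume "j \<le> m"
    then have j: "j < length xs"
      using len by simp
    show "0 \<le> (-1) ^ (p + j) * q (xs ! j)"
    proof (cases "j = p")
      case True
      then show ?thesis
        using nonneg by simp
    next
      case False
      then have "xs ! j \<noteq> i0"
        using p dist j nth_eq_iff_index_eq by metis
      then show ?thesis
        using nth_mem[OF j] set_xs unfolding A_def by simp
    qed
  qed
  moreover have "xs ! m < L"
    using nth_mem[of m xs] len set_xs A_less by simp
  ultimately show ?thesis
    unfolding sign_alternation_def m_def by blast
qed

lemma sign_alternation_butlast:
  assumes "sign_alternation q (Suc L) (Suc m)"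
  shows "sign_alternation q L m"
proof -
  obtain ks s where chain: "alternating_chain q ks s (Suc m)" and "ks (Suc m) < Suc L"
    using assms unfolding sign_alternation_def by blast
  then have "alternating_chain q ks s m" "ks m < L"
    unfolding alternating_chain_def by auto
  then show ?thesis
    unfolding sign_alternation_def by blast
qed

lemma sign_alternation_snoc_zero:
  assumes "sign_alternation q L m" "q L = 0"
  shows "sign_alternation q (Suc L) (Suc m)"
proof -
  obtain ks s where chain: "alternating_chain q ks s m" and "ks m < L"
    using assms(1) unfolding sign_alternation_def by blast
  then have "alternating_chain q (ks(Suc m := L)) s (Suc m)"
    using assms(2) unfolding alternating_chain_def by (auto simp: less_Suc_eq le_Suc_eq)
  then show ?thesis
    unfolding sign_alternation_def by (intro exI[of _ "ks(Suc m := L)"] exI[of _ s]) simp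
qed

definition mult_one_plus :: "(nat \<Rightarrow> real) \<Rightarrow> nat \<Rightarrow> real" where
  "mult_one_plus q i = (if i = 0 then 0 else q (i - 1)) + q i"

lemma mult_one_plus_0 [simp]: "mult_one_plus q 0 = q 0"
  by (simp add: mult_one_plus_def)

lemma mult_one_plus_pos: "0 < i \<Longrightarrow> mult_one_plus q i = q (i - 1) + q i"
  by (simp add: mult_one_plus_def)

lemma sum_mult_one_plus:
  assumes "\<forall>i>K. q i = 0"
  shows "(\<Sum>i\<le>Suc K. mult_one_plus q i * t ^ i) = (1 + t) * (\<Sum>i\<le>K. q i * t ^ i)"
proof -
  have "(\<Sum>i\<le>Suc K. mult_one_plus q i * t ^ i)
      = (\<Sum>i\<le>Suc K. (if i = 0 then 0 else q (i - 1)) * t ^ i) + (\<Sum>i\<le>Suc K. q i * t ^ i)"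
    unfolding mult_one_plus_def by (simp only: distrib_right sum.distrib)
  also have "(\<Sum>i\<le>Suc K. (if i = 0 then 0 else q (i - 1)) * t ^ i) = t * (\<Sum>i\<le>K. q i * t ^ i)"
    by (subst sum.atMost_Suc_shift) (simp add: sum_distrib_left algebra_simps)
  also have "(\<Sum>i\<le>Suc K. q i * t ^ i) = (\<Sum>i\<le>K. q i * t ^ i)"
    using assms by simp
  finally show ?thesis
    by (simp add: algebra_simps)
qed

text \<open>The greedy step behind the fact that multiplying by \<open>1 + t\<close> creates no sign changes:
  a sign required of \<open>q (i - 1) + q i\<close> is found at \<open>i - 1\<close> or at \<open>i\<close>.\<close>

lemma mult_one_plus_sign_first:
  fixes q :: "nat \<Rightarrow> real"
  assumes top: "q (L - 1) \<noteq> 0" and zero: "\<forall>i\<ge>L. q i = 0"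
    and "i \<le> L" "0 \<le> \<sigma> * mult_one_plus q i"
  shows "\<exists>k. k \<le> i \<and> k < L \<and> 0 \<le> \<sigma> * q k"
proof (cases "i = 0")
  case True
  have "0 < L"
    using top zero by (metis bot_nat_0.extremum diff_0_eq_0 gr0I)
  then show ?thesis
    using True assms(4) by auto
next
  case False
  then have split: "\<sigma> * mult_one_plus q i = \<sigma> * q (i - 1) + \<sigma> * q i"
    by (simp add: mult_one_plus_pos distrib_left)
  show ?thesis
  proof (cases "0 \<le> \<sigma> * q (i - 1)")
    case True
    then show ?thesis
      using False assms(3) by (intro exI[of _ "i - 1"]) auto
  next
    case neg: False
    then have "0 < \<sigma> * q i"
      using split assms(4) by linarith
    then have "i < L"
      using zero by (metis less_irrefl mult_zero_right not_le)
    then show ?thesis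
      using \<open>0 < \<sigma> * q i\<close> by (intro exI[of _ i]) auto
  qed
qed

lemma mult_one_plus_sign_step:
  fixes q :: "nat \<Rightarrow> real"
  assumes top: "q (L - 1) \<noteq> 0" and zero: "\<forall>i\<ge>L. q i = 0" and "\<sigma> \<noteq> 0"
    and "k < i" "i \<le> L" "\<sigma> * q k \<le> 0" "0 \<le> \<sigma> * mult_one_plus q i"
  shows "\<exists>k'. k < k' \<and> k' \<le> i \<and> k' < L \<and> 0 \<le> \<sigma> * q k'"
proof -
  have split: "\<sigma> * mult_one_plus q i = \<sigma> * q (i - 1) + \<sigma> * q i"
    using \<open>k < i\<close> by (simp add: mult_one_plus_pos distrib_left)
  consider "k < i - 1" "0 \<le> \<sigma> * q (i - 1)" | "\<sigma> * q (i - 1) < 0" | "k = i - 1" "0 \<le> \<sigma> * q (i - 1)"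
    using \<open>k < i\<close> by linarith
  then show ?thesis
  proof cases
    case 1
    then show ?thesis
      using assms(5) by (intro exI[of _ "i - 1"]) auto
  next
    case 2
    then have "0 < \<sigma> * q i"
      using split assms(7) by linarith
    then have "i < L"
      using zero by (metis less_irrefl mult_zero_right not_le)
    then show ?thesis
      using \<open>0 < \<sigma> * q i\<close> \<open>k < i\<close> by (intro exI[of _ i]) auto
  next
    case 3
    then have "q (i - 1) = 0"
      using assms(3,6) by (metis antisym mult_eq_0_iff)
    then have "i < L" "0 \<le> \<sigma> * q i"
      using top assms(5,7) split by (auto simp: le_less)
    then show ?thesis
      using \<open>k < i\<close> by (intro exI[of _ i]) auto
  qed
qed

lemma sign_alternation_mult_one_plus_lead:
  fixes q :: "nat \<Rightarrow> real"
  assumes top: "q (L - 1) \<noteq> 0" and zero: "\<forall>i\<ge>L. q i = 0"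
    and "sign_alternation (mult_one_plus q) (Suc L) m"
  shows "sign_alternation q L m"
proof -
  obtain ks s where chain: "alternating_chain (mult_one_plus q) ks s m" and "ks m < Suc L"
    using assms(3) unfolding sign_alternation_def by blast
  have incr: "\<forall>j<m. ks j < ks (Suc j)"
    and signs: "\<And>j. j \<le> m \<Longrightarrow> 0 \<le> (-1) ^ (s + j) * mult_one_plus q (ks j)"
    using chain unfolding alternating_chain_def by auto
  have ks_le: "ks j \<le> L" if "j \<le> m" for j
    using chain_le[OF incr that order_refl] \<open>ks m < Suc L\<close> by simp
  have "\<exists>kq. alternating_chain q kq s j \<and> kq j < L \<and> kq j \<le> ks j" if "j \<le> m" for j
    using that
  proof (induction j)
    case 0
    then obtain k where "k \<le> ks 0" "k < L" "0 \<le> (-1) ^ s * q k"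
      using mult_one_plus_sign_first[OF top zero ks_le signs, of 0] by auto
    then have "alternating_chain q (\<lambda>_. k) s 0"
      unfolding alternating_chain_def by simp
    then show ?case
      using \<open>k \<le> ks 0\<close> \<open>k < L\<close> by blast
  next
    case (Suc j)
    then obtain kq where kq: "alternating_chain q kq s j" "kq j < L" "kq j \<le> ks j"
      by auto
    have "kq j < ks (Suc j)"
      using kq(3) incr Suc.prems by (simp add: Suc_le_eq le_less_trans)
    moreover have "(-1) ^ (s + Suc j) * q (kq j) \<le> 0"
      using kq(1) unfolding alternating_chain_def by simp
    moreover have "(-1) ^ (s + Suc j) \<noteq> (0::real)"
      by simp
    ultimately obtain k where k: "kq j < k" "k \<le> ks (Suc j)" "k < L"
        "0 \<le> (-1) ^ (s + Suc j) * q k"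
      using mult_one_plus_sign_step[OF top zero _ _ ks_le[OF Suc.prems] _ signs[OF Suc.prems]]
      by blast
    then have "alternating_chain q (kq(Suc j := k)) s (Suc j)"
      using kq(1) unfolding alternating_chain_def by (auto simp: less_Suc_eq le_Suc_eq)
    moreover have "(kq(Suc j := k)) (Suc j) = k"
      by simp
    ultimately show ?case
      using k(2,3) by metis
  qed
  then show ?thesis
    unfolding sign_alternation_def by blast
qed

lemma sign_alternation_mult_one_plus:
  fixes q :: "nat \<Rightarrow> real"
  assumes "\<forall>i\<ge>L. q i = 0" "\<exists>i<L. q i \<noteq> 0" "sign_alternation (mult_one_plus q) (Suc L) m"
  shows "sign_alternation q L m"
  using assms
proof (induction L arbitrary: m)
  case 0
  then show ?case by simp
next
  case (Suc L)
  show ?case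
  proof (cases "q L = 0")
    case False
    then show ?thesis
      using sign_alternation_mult_one_plus_lead Suc.prems by simp
  next
    case True
    have zero: "\<forall>i\<ge>L. q i = 0"
      using Suc.prems(1) True by (metis le_eq_less_or_eq Suc_leI)
    have nonzero: "\<exists>i<L. q i \<noteq> 0"
      using Suc.prems(2) True by (metis less_Suc_eq)
    show ?thesis
    proof (cases m)
      case 0
      then show ?thesis
        using sign_alternation_0 by simp
    next
      case (Suc m')
      then have "sign_alternation (mult_one_plus q) (Suc L) m'"
        using sign_alternation_butlast Suc.prems(3) by simp
      then have "sign_alternation q L m'"
        using Suc.IH zero nonzero by blast
      then show ?thesis
        using sign_alternation_snoc_zero True Suc by simp
    qed
  qed
qed

lemma mult_one_plus_two_nonzero:
  assumes zero: "\<forall>i\<ge>L. q i = 0" and "q i0 \<noteq> 0"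
  shows "2 \<le> card {i. i < Suc L \<and> mult_one_plus q i \<noteq> 0}"
proof -
  define Z where "Z = {i. q i \<noteq> 0}"
  have "Z \<subseteq> {..<L}"
    using zero unfolding Z_def by (auto simp: not_less[symmetric])
  then have "finite Z"
    using finite_subset by blast
  have "i0 \<in> Z"
    using assms(2) unfolding Z_def by simp
  define lo where "lo = Min Z"
  define hi where "hi = Max Z"
  have lo: "lo \<in> Z" "\<forall>i\<in>Z. lo \<le> i" and hi: "hi \<in> Z" "\<forall>i\<in>Z. i \<le> hi"
    using \<open>finite Z\<close> \<open>i0 \<in> Z\<close> unfolding lo_def hi_def by (auto intro: Min_in Max_in)
  have "lo < Suc hi" "Suc hi < Suc L"
    using lo hi \<open>Z \<subseteq> {..<L}\<close> by (auto simp: less_Suc_eq_le)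
  have "lo = 0 \<or> lo - 1 \<notin> Z"
    using lo(2) by (metis diff_less less_le_not_le less_one not_gr0)
  then have "mult_one_plus q lo = q lo"
    unfolding Z_def mult_one_plus_def by auto
  moreover have "mult_one_plus q (Suc hi) = q hi"
    using hi(2) unfolding Z_def mult_one_plus_def by force
  ultimately have "{lo, Suc hi} \<subseteq> {i. i < Suc L \<and> mult_one_plus q i \<noteq> 0}"
    using lo(1) hi(1) \<open>lo < Suc hi\<close> \<open>Suc hi < Suc L\<close> unfolding Z_def by auto
  from card_mono[OF _ this] show ?thesis
    using \<open>lo < Suc hi\<close> by simp
qed

section \<open>Bivariate polynomials equal to one on the line \<open>x + y = 1\<close>\<close>

definition hom_part :: "(nat \<Rightarrow> nat \<Rightarrow> real) \<Rightarrow> nat \<Rightarrow> nat \<Rightarrow> real" where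
  "hom_part f k i = (if i \<le> k then f i (k - i) else 0)"

definition num_terms :: "(nat \<Rightarrow> nat \<Rightarrow> real) \<Rightarrow> nat \<Rightarrow> nat" where
  "num_terms f k = card {i. i \<le> k \<and> f i (k - i) \<noteq> 0}"

fun remainder :: "(nat \<Rightarrow> nat \<Rightarrow> real) \<Rightarrow> nat \<Rightarrow> nat \<Rightarrow> real" where
  "remainder f 0 i = (if i = 0 then 1 else 0) - hom_part f 0 i"
| "remainder f (Suc k) i = mult_one_plus (remainder f k) i - hom_part f (Suc k) i"

lemma num_terms_eq_card_hom_part:
  "num_terms f k = card {i. i < Suc k \<and> hom_part f k i \<noteq> 0}"
  unfolding num_terms_def hom_part_def by (metis less_Suc_eq_le)

lemma remainder_eq_0: "k < i \<Longrightarrow> remainder f k i = 0"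
  by (induction k arbitrary: i) (auto simp: mult_one_plus_def hom_part_def)

lemma remainder_identity:
  "(\<Sum>k\<le>K. (\<Sum>i\<le>k. hom_part f k i * t ^ i) * (1 + t) ^ (K - k))
     + (\<Sum>i\<le>K. remainder f K i * t ^ i) = (1 + t) ^ K"
proof (induction K)
  case 0
  then show ?case by (simp add: hom_part_def)
next
  case (Suc K)
  define P where "P k = (\<Sum>i\<le>k. hom_part f k i * t ^ i)" for k
  define A where "A = (\<Sum>k\<le>K. P k * (1 + t) ^ (K - k))"
  define B where "B = (\<Sum>i\<le>K. remainder f K i * t ^ i)"
  have "(\<Sum>k\<le>Suc K. P k * (1 + t) ^ (Suc K - k)) = (1 + t) * A + P (Suc K)"
    unfolding A_def by (simp add: sum_distrib_left Suc_diff_le algebra_simps)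
  moreover have "(\<Sum>i\<le>Suc K. remainder f (Suc K) i * t ^ i)
      = (\<Sum>i\<le>Suc K. mult_one_plus (remainder f K) i * t ^ i) - P (Suc K)"
    unfolding P_def by (simp del: sum.atMost_Suc add: left_diff_distrib sum_subtractf)
  moreover have "(\<Sum>i\<le>Suc K. mult_one_plus (remainder f K) i * t ^ i) = (1 + t) * B"
    unfolding B_def using remainder_eq_0[of K _ f] by (intro sum_mult_one_plus) simp
  ultimately have "(\<Sum>k\<le>Suc K. P k * (1 + t) ^ (Suc K - k))
      + (\<Sum>i\<le>Suc K. remainder f (Suc K) i * t ^ i)
      = (1 + t) * A + P (Suc K) + ((1 + t) * B - P (Suc K))"
    by (simp only:)
  also have "\<dots> = (1 + t) * (A + B)"
    by (simp add: algebra_simps)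
  also have "A + B = (1 + t) ^ K"
    using Suc.IH unfolding A_def B_def P_def .
  finally have "(\<Sum>k\<le>Suc K. P k * (1 + t) ^ (Suc K - k))
      + (\<Sum>i\<le>Suc K. remainder f (Suc K) i * t ^ i) = (1 + t) ^ Suc K"
    by simp
  then show ?case
    unfolding P_def .
qed

lemma remainder_nonpos:
  assumes "\<forall>a b. 0 \<le> f a b" "\<forall>i. remainder f k i \<le> 0" "k \<le> k'"
  shows "remainder f k' i \<le> 0"
  using assms(3,2)
proof (induction k' arbitrary: i rule: dec_induct)
  case base
  then show ?case by simp
next
  case (step l)
  have "0 \<le> hom_part f (Suc l) i"
    using assms(1) by (simp add: hom_part_def)
  moreover have "remainder f l (i - 1) \<le> 0" "remainder f l i \<le> 0"
    using step.IH[OF step.prems] by auto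
  ultimately show ?case
    by (cases i) (simp_all add: mult_one_plus_def)
qed

lemma sum_num_terms: "(\<Sum>k\<le>D. num_terms f k) = card {(a, b). a + b \<le> D \<and> f a b \<noteq> 0}"
proof -
  have fin: "finite {(a, b). a + b \<le> (D::nat)}"
    by (rule finite_subset[of _ "{..D} \<times> {..D}"]) auto
  have "{(a, b). a + b \<le> D \<and> f a b \<noteq> 0} = {x \<in> {(a, b). a + b \<le> D}. f (fst x) (snd x) \<noteq> 0}"
    by auto
  then have "card {(a, b). a + b \<le> D \<and> f a b \<noteq> 0}
      = (\<Sum>x \<in> {(a, b). a + b \<le> D}. if f (fst x) (snd x) \<noteq> 0 then 1 else 0)"
    using sum.inter_filter[OF fin, of "\<lambda>_. 1::nat"] by simp
  also have "\<dots> = (\<Sum>(a, b) | a + b \<le> D. if f a b \<noteq> 0 then 1 else 0)"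
    by (simp add: case_prod_beta)
  also have "\<dots> = (\<Sum>k\<le>D. \<Sum>i\<le>k. if f i (k - i) \<noteq> 0 then 1 else 0)"
    by (rule sum.triangle_reindex_eq)
  also have "\<dots> = (\<Sum>k\<le>D. num_terms f k)"
    unfolding num_terms_def by (simp add: sum.If_cases Int_def conj_commute)
  finally show ?thesis ..
qed

locale unit_on_line =
  fixes f :: "nat \<Rightarrow> nat \<Rightarrow> real" and D :: nat
  assumes nonneg: "0 \<le> f a b"
    and top_degree: "\<exists>a\<le>D. f a (D - a) \<noteq> 0"
    and sum_eq_1: "(\<Sum>(a, b) | a + b \<le> D. f a b * x ^ a * (1 - x) ^ b) = 1"
begin

lemma hom_part_nonneg: "0 \<le> hom_part f k i"
  using nonneg by (simp add: hom_part_def)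

text \<open>The substitution \<open>x = t / (1 + t)\<close>, \<open>1 - x = 1 / (1 + t)\<close>.\<close>

lemma dehomogenized_identity:
  assumes "0 \<le> t"
  shows "(\<Sum>k\<le>D. (\<Sum>i\<le>k. hom_part f k i * t ^ i) * (1 + t) ^ (D - k)) = (1 + t) ^ D"
proof -
  define x where "x = t / (1 + t)"
  have "1 + t \<noteq> 0"
    using assms by simp
  then have x: "x * (1 + t) = t" "(1 - x) * (1 + t) = 1"
    unfolding x_def by (simp_all add: field_simps)
  have scaled: "f a b * x ^ a * (1 - x) ^ b * (1 + t) ^ D = f a b * t ^ a * (1 + t) ^ (D - (a + b))"
    if "a + b \<le> D" for a b
  proof -
    have "(1 + t) ^ D = (1 + t) ^ a * (1 + t) ^ b * (1 + t) ^ (D - (a + b))"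
      using that by (simp flip: power_add)
    then have "f a b * x ^ a * (1 - x) ^ b * (1 + t) ^ D
        = f a b * (x * (1 + t)) ^ a * ((1 - x) * (1 + t)) ^ b * (1 + t) ^ (D - (a + b))"
      by (simp add: power_mult_distrib ac_simps)
    then show ?thesis
      using x by simp
  qed
  have "(1 + t) ^ D = (\<Sum>(a, b) | a + b \<le> D. f a b * x ^ a * (1 - x) ^ b) * (1 + t) ^ D"
    using sum_eq_1 by simp
  also have "\<dots> = (\<Sum>(a, b) | a + b \<le> D. f a b * t ^ a * (1 + t) ^ (D - (a + b)))"
    unfolding sum_distrib_right by (rule sum.cong) (auto simp: scaled)
  also have "\<dots> = (\<Sum>k\<le>D. \<Sum>i\<le>k. f i (k - i) * t ^ i * (1 + t) ^ (D - (i + (k - i))))"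
    by (rule sum.triangle_reindex_eq)
  also have "\<dots> = (\<Sum>k\<le>D. (\<Sum>i\<le>k. hom_part f k i * t ^ i) * (1 + t) ^ (D - k))"
    by (auto simp: sum_distrib_right hom_part_def intro!: sum.cong)
  finally show ?thesis ..
qed

text \<open>Both sides of the identity agree for infinitely many \<open>t\<close>, so the remainder vanishes.\<close>

lemma remainder_top: "remainder f D i = 0"
proof -
  have "(\<Sum>i\<le>D. remainder f D i * t ^ i) = 0" if "0 \<le> t" for t :: real
    using remainder_identity[where K = D and f = f and t = t] dehomogenized_identity[OF that] by simp
  then have "{0::real..} \<subseteq> {t. (\<Sum>i\<le>D. remainder f D i * t ^ i) = 0}"
    by auto
  then have "infinite {t::real. (\<Sum>i\<le>D. remainder f D i * t ^ i) = 0}"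
    using infinite_Ici finite_subset by blast
  then show ?thesis
    using polyfun_finite_roots[of "remainder f D" D] remainder_eq_0[of D i f]
    by (cases "i \<le> D") auto
qed

lemma hom_part_top:
  assumes "0 < D"
  shows "hom_part f D i = mult_one_plus (remainder f (D - 1)) i"
  using remainder_top[of i] assms by (metis Suc_diff_1 eq_iff_diff_eq_0 remainder.simps(2))

lemma remainder_nonzero:
  assumes "k < D"
  shows "\<exists>i<Suc k. remainder f k i \<noteq> 0"
proof (rule ccontr)
  assume "\<not> (\<exists>i<Suc k. remainder f k i \<noteq> 0)"
  then have "\<forall>i. remainder f k i \<le> 0"
    using remainder_eq_0[of k _ f] by (metis not_less_eq order_refl)
  then have "remainder f (D - 1) i \<le> 0" for i
    using remainder_nonpos nonneg assms by simp
  then have "hom_part f D i \<le> 0" for i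
    using hom_part_top assms by (simp add: mult_one_plus_def add_nonpos_nonpos)
  then have "hom_part f D i = 0" for i
    using hom_part_nonneg by (simp add: order_antisym)
  then show False
    using top_degree unfolding hom_part_def by (metis (full_types))
qed

lemma sign_alternation_remainder:
  assumes "k < D" "sign_alternation (remainder f k) (Suc k) m"
  shows "m \<le> 2 * (\<Sum>j\<in>{1..k}. num_terms f j)"
  using assms
proof (induction k arbitrary: m)
  case 0
  then show ?case
    using sign_alternation_less by fastforce
next
  case (Suc k)
  define E where "E = {i. i < Suc (Suc k) \<and> hom_part f (Suc k) i \<noteq> 0}"
  have "\<forall>i. i \<notin> E \<longrightarrow> mult_one_plus (remainder f k) i = remainder f (Suc k) i"
    by (auto simp: E_def hom_part_def)
  then have "sign_alternation (mult_one_plus (remainder f k)) (Suc (Suc k)) (m - 2 * card E)"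
    using sign_alternation_modify Suc.prems(2) unfolding E_def by simp
  then have "sign_alternation (remainder f k) (Suc k) (m - 2 * num_terms f (Suc k))"
    using sign_alternation_mult_one_plus remainder_eq_0 remainder_nonzero Suc.prems(1)
    unfolding E_def num_terms_eq_card_hom_part by (simp add: Suc_le_lessD)
  then have "m - 2 * num_terms f (Suc k) \<le> 2 * (\<Sum>j\<in>{1..k}. num_terms f j)"
    using Suc.IH Suc.prems(1) by simp
  then show ?case
    by simp
qed

lemma num_terms_top:
  assumes "0 < D"
  shows "2 \<le> num_terms f D"
proof -
  obtain i where "remainder f (D - 1) i \<noteq> 0"
    using remainder_nonzero[of "D - 1"] assms by auto
  moreover have "\<forall>i\<ge>D. remainder f (D - 1) i = 0"
    using remainder_eq_0 assms by simp
  ultimately show ?thesis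
    using mult_one_plus_two_nonzero[of D "remainder f (D - 1)" i]
    unfolding num_terms_eq_card_hom_part hom_part_top[OF assms] by simp
qed

theorem monomial_count:
  assumes "0 < D"
  shows "D + 3 \<le> 2 * card {(a, b). a + b \<le> D \<and> f a b \<noteq> 0}"
proof -
  obtain a where "a \<le> D" "hom_part f D a \<noteq> 0"
    using top_degree unfolding hom_part_def by auto
  then have "sign_alternation (hom_part f D) (Suc D) (Suc D - num_terms f D)"
    using sign_alternation_nonneg[of "hom_part f D" a "Suc D"] hom_part_nonneg
    unfolding num_terms_eq_card_hom_part by simp
  moreover have "hom_part f D = mult_one_plus (remainder f (D - 1))"
    using hom_part_top[OF assms] by (rule ext)
  moreover have "\<exists>i<D. remainder f (D - 1) i \<noteq> 0"
    using remainder_nonzero[of "D - 1"] assms by simp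
  ultimately have "sign_alternation (remainder f (D - 1)) D (Suc D - num_terms f D)"
    using sign_alternation_mult_one_plus[of D "remainder f (D - 1)"] remainder_eq_0 assms by simp
  then have "Suc D - num_terms f D \<le> 2 * (\<Sum>j\<in>{1..D - 1}. num_terms f j)"
    using sign_alternation_remainder assms by simp
  moreover have "(\<Sum>j\<in>{1..D - 1}. num_terms f j) + num_terms f D \<le> (\<Sum>j\<le>D. num_terms f j)"
  proof -
    have "(\<Sum>j\<in>{1..D - 1}. num_terms f j) + num_terms f D = (\<Sum>j\<in>insert D {1..D - 1}. num_terms f j)"
      using assms by simp
    also have "\<dots> \<le> (\<Sum>j\<le>D. num_terms f j)"
      by (rule sum_mono2) auto
    finally show ?thesis .
  qed
  moreover have "num_terms f D \<le> Suc D"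
    using card_mono[of "{..D}" "{i. i \<le> D \<and> f i (D - i) \<noteq> 0}"]
    unfolding num_terms_def by auto
  ultimately show ?thesis
    using num_terms_top[OF assms] sum_num_terms[of f D] by linarith
qed

end

section \<open>Lucas polynomials and partitions of unity\<close>

text \<open>The coefficients of the Lucas polynomials
  \<open>L\<^sub>0 = 2\<close>, \<open>L\<^sub>1 = x\<close>, \<open>L\<^sub>k\<^sub>+\<^sub>2 = x L\<^sub>k\<^sub>+\<^sub>1 + y L\<^sub>k\<close>:
  \<open>L\<^sub>k = (\<Sum>j. lucas_coeff k j * x ^ (k - 2 * j) * y ^ j)\<close>.\<close>

fun lucas_coeff :: "nat \<Rightarrow> nat \<Rightarrow> real" where
  "lucas_coeff 0 j = (if j = 0 then 2 else 0)"
| "lucas_coeff (Suc 0) j = (if j = 0 then 1 else 0)"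
| "lucas_coeff (Suc (Suc k)) j = lucas_coeff (Suc k) j + (if j = 0 then 0 else lucas_coeff k (j - 1))"

definition lucas_poly :: "nat \<Rightarrow> real \<Rightarrow> real \<Rightarrow> real" where
  "lucas_poly k x y = (\<Sum>j\<le>k. lucas_coeff k j * x ^ (k - 2 * j) * y ^ j)"

lemma lucas_coeff_nonneg: "0 \<le> lucas_coeff k j"
  by (induction k j rule: lucas_coeff.induct) auto

lemma lucas_coeff_eq_0: "k < 2 * j \<Longrightarrow> lucas_coeff k j = 0"
  by (induction k j rule: lucas_coeff.induct) auto

lemma lucas_coeff_pos: "2 * j \<le> k \<Longrightarrow> 0 < lucas_coeff k j"
proof (induction k j rule: lucas_coeff.induct)
  case (3 k j)
  show ?case
  proof (cases "2 * j \<le> Suc k")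
    case True
    then show ?thesis
      using 3 lucas_coeff_nonneg[of k "j - 1"] by (simp add: add_pos_nonneg)
  next
    case False
    then have "j \<noteq> 0" "2 * (j - 1) \<le> k"
      using 3(3) by auto
    then show ?thesis
      using 3(2) lucas_coeff_nonneg[of "Suc k" j] by (simp add: add_nonneg_pos)
  qed
qed auto

lemma lucas_poly_Suc_Suc: "lucas_poly (Suc (Suc k)) x y = x * lucas_poly (Suc k) x y + y * lucas_poly k x y"
proof -
  have shift: "lucas_coeff (Suc k) j * x ^ (Suc (Suc k) - 2 * j) * y ^ j
      = x * (lucas_coeff (Suc k) j * x ^ (Suc k - 2 * j) * y ^ j)" for j
    by (cases "2 * j \<le> Suc k") (simp_all add: Suc_diff_le lucas_coeff_eq_0)
  have first: "(\<Sum>j\<le>Suc (Suc k). lucas_coeff (Suc k) j * x ^ (Suc (Suc k) - 2 * j) * y ^ j)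
      = x * lucas_poly (Suc k) x y"
    unfolding lucas_poly_def using lucas_coeff_eq_0[of "Suc k" "Suc (Suc k)"]
    by (simp only: sum.atMost_Suc[of _ "Suc k"] shift) (simp add: sum_distrib_left distrib_left)
  have "(\<Sum>j\<le>Suc (Suc k). (if j = 0 then 0 else lucas_coeff k (j - 1)) * x ^ (Suc (Suc k) - 2 * j) * y ^ j)
      = (\<Sum>j\<le>Suc k. y * (lucas_coeff k j * x ^ (k - 2 * j) * y ^ j))"
    by (subst sum.atMost_Suc_shift) (simp add: algebra_simps)
  also have "\<dots> = y * lucas_poly k x y"
    unfolding lucas_poly_def using lucas_coeff_eq_0[of k "Suc k"] by (simp add: sum_distrib_left)
  finally show ?thesis
    using first unfolding lucas_poly_def by (simp add: sum.distrib algebra_simps)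
qed

lemma lucas_poly_on_line: "lucas_poly k x (1 - x) = 1 + (x - 1) ^ k"
proof (induction k rule: less_induct)
  case (less k)
  consider "k = 0" | "k = 1" | m where "k = Suc (Suc m)"
    by (metis One_nat_def not0_implies_Suc)
  then show ?case
  proof cases
    case 3
    then have "lucas_poly k x (1 - x) = x * (1 + (x - 1) ^ Suc m) + (1 - x) * (1 + (x - 1) ^ m)"
      using less[of m] less[of "Suc m"] by (simp add: lucas_poly_Suc_Suc)
    also have "\<dots> = 1 + (x - 1) ^ k"
      using 3 by (simp add: algebra_simps)
    finally show ?thesis .
  qed (simp_all add: lucas_poly_def)
qed

definition partition_of_unity ::
    "nat \<Rightarrow> nat \<Rightarrow> (nat \<Rightarrow> nat) \<Rightarrow> (nat \<Rightarrow> nat) \<Rightarrow> (nat \<Rightarrow> real) \<Rightarrow> bool" where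
  "partition_of_unity n D U V K \<longleftrightarrow> (\<forall>i<n. 0 < K i \<and> U i + V i \<le> D)
     \<and> (\<forall>x. (\<Sum>i<n. K i * x ^ U i * (1 - x) ^ V i) = 1)"

lemma lucas_partition_of_unity:
  assumes "2 \<le> n"
  defines "D \<equiv> 2 * n - 3"
  shows "partition_of_unity n D (\<lambda>i. if i = n - 1 then 0 else D - 2 * i)
    (\<lambda>i. if i = n - 1 then D else i) (\<lambda>i. if i = n - 1 then 1 else lucas_coeff D i)"
proof -
  have "odd D"
    unfolding D_def using assms by presburger
  have "(\<Sum>i<n. (if i = n - 1 then 1 else lucas_coeff D i)
      * x ^ (if i = n - 1 then 0 else D - 2 * i) * (1 - x) ^ (if i = n - 1 then D else i)) = 1"
    (is "(\<Sum>i<n. ?g i) = 1") for x :: real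
  proof -
    have odd_power: "(x - 1) ^ D = - ((1 - x) ^ D)"
      using power_minus_odd[OF \<open>odd D\<close>, of "1 - x"] by simp
    have "Suc (n - 1) = n"
      using assms by simp
    then have "(\<Sum>i<n. ?g i) = (\<Sum>i<n - 1. ?g i) + ?g (n - 1)"
      using sum.lessThan_Suc[of ?g "n - 1"] by (simp only:)
    also have "(\<Sum>i<n - 1. ?g i) = (\<Sum>i<n - 1. lucas_coeff D i * x ^ (D - 2 * i) * (1 - x) ^ i)"
      by (rule sum.cong) auto
    also have "\<dots> = lucas_poly D x (1 - x)"
      unfolding lucas_poly_def
      by (rule sum.mono_neutral_left) (use assms lucas_coeff_eq_0 in \<open>auto simp: D_def\<close>)
    also have "lucas_poly D x (1 - x) + ?g (n - 1) = 1"
      using lucas_poly_on_line[of D x] odd_power by simp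
    finally show ?thesis .
  qed
  moreover have "lucas_coeff D i > 0" if "i < n - 1" for i
    using lucas_coeff_pos that unfolding D_def by simp
  ultimately show ?thesis
    unfolding partition_of_unity_def D_def by auto
qed

lemma partition_of_unity_permute:
  assumes "partition_of_unity n D U V K" "bij_betw \<pi> {..<n} {..<n}"
  shows "partition_of_unity n D (U \<circ> \<pi>) (V \<circ> \<pi>) (K \<circ> \<pi>)"
proof -
  have "(\<Sum>i<n. K (\<pi> i) * x ^ U (\<pi> i) * (1 - x) ^ V (\<pi> i)) = 1" for x :: real
    using sum.reindex_bij_betw[OF assms(2), of "\<lambda>i. K i * x ^ U i * (1 - x) ^ V i"] assms(1)
    unfolding partition_of_unity_def by simp
  moreover have "\<pi> i < n" if "i < n" for i
    using assms(2) that by (auto dest: bij_betwE)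
  ultimately show ?thesis
    using assms(1) unfolding partition_of_unity_def by simp
qed

lemma partition_of_unity_extremes:
  assumes "2 \<le> n" "i0 < n" "j0 < n" "i0 \<noteq> j0"
  shows "\<exists>U V K. partition_of_unity n (2 * n - 3) U V K
    \<and> U i0 = 2 * n - 3 \<and> V i0 = 0 \<and> U j0 = 0 \<and> V j0 = 2 * n - 3"
proof -
  define c where "c = transpose i0 0 j0"
  define \<pi> where "\<pi> = transpose c (n - 1) \<circ> transpose i0 0"
  have "c < n" "c \<noteq> 0"
    using assms unfolding c_def transpose_def by auto
  have "bij_betw \<pi> {..<n} {..<n}"
    unfolding \<pi>_def by (rule bij_betw_trans[where B = "{..<n}"]) (use assms \<open>c < n\<close> in simp_all)
  moreover have "\<pi> i0 = 0" "\<pi> j0 = n - 1"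
    using \<open>c \<noteq> 0\<close> assms unfolding \<pi>_def c_def by auto
  let ?U = "\<lambda>i. if i = n - 1 then 0 else 2 * n - 3 - 2 * i"
  let ?V = "\<lambda>i. if i = n - 1 then 2 * n - 3 else i"
  let ?K = "\<lambda>i. if i = n - 1 then 1 else lucas_coeff (2 * n - 3) i"
  have "partition_of_unity n (2 * n - 3) (?U \<circ> \<pi>) (?V \<circ> \<pi>) (?K \<circ> \<pi>)"
    by (rule partition_of_unity_permute[OF lucas_partition_of_unity[OF assms(1)]]) fact
  moreover have "(?U \<circ> \<pi>) i0 = 2 * n - 3" "(?V \<circ> \<pi>) i0 = 0"
    "(?U \<circ> \<pi>) j0 = 0" "(?V \<circ> \<pi>) j0 = 2 * n - 3"
    using \<open>\<pi> i0 = 0\<close> \<open>\<pi> j0 = n - 1\<close> assms(1) by auto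
  ultimately show ?thesis
    by blast
qed

section \<open>Substitution into a polynomial of \<open>H(n, d)\<close>\<close>

definition weighted_deg :: "nat \<Rightarrow> (nat \<Rightarrow> nat) \<Rightarrow> (nat \<Rightarrow> nat) \<Rightarrow> nat" where
  "weighted_deg n U \<alpha> = (\<Sum>i<n. \<alpha> i * U i)"

text \<open>\<open>substitute n U V K p a b\<close> is the coefficient of \<open>x ^ a * y ^ b\<close> in
  \<open>p (K\<^sub>0 x ^ U\<^sub>0 y ^ V\<^sub>0, \<dots>, K\<^sub>n\<^sub>-\<^sub>1 x ^ U\<^sub>n\<^sub>-\<^sub>1 y ^ V\<^sub>n\<^sub>-\<^sub>1)\<close>.\<close>

definition substitute :: "nat \<Rightarrow> (nat \<Rightarrow> nat) \<Rightarrow> (nat \<Rightarrow> nat) \<Rightarrow> (nat \<Rightarrow> real)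
    \<Rightarrow> ((nat \<Rightarrow> nat) \<Rightarrow> real) \<Rightarrow> nat \<Rightarrow> nat \<Rightarrow> real" where
  "substitute n U V K p a b =
     (\<Sum>\<alpha> | \<alpha> \<in> mon_support p \<and> weighted_deg n U \<alpha> = a \<and> weighted_deg n V \<alpha> = b.
        p \<alpha> * (\<Prod>i<n. K i ^ \<alpha> i))"

lemma substitute_nonneg:
  assumes "\<forall>\<alpha>. 0 \<le> p \<alpha>" "\<forall>i<n. 0 \<le> K i"
  shows "0 \<le> substitute n U V K p a b"
  unfolding substitute_def using assms by (intro sum_nonneg mult_nonneg_nonneg prod_nonneg) auto

lemma substitute_pos:
  assumes "finite (mon_support p)" "\<forall>\<alpha>. 0 \<le> p \<alpha>" "\<forall>i<n. 0 < K i" "\<alpha> \<in> mon_support p"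
  shows "0 < substitute n U V K p (weighted_deg n U \<alpha>) (weighted_deg n V \<alpha>)"
  unfolding substitute_def
proof (rule sum_pos2)
  have "0 < p \<alpha>"
    using assms(2,4) unfolding mon_support_def by (simp add: less_le)
  moreover have "0 < (\<Prod>i<n. K i ^ \<alpha> i)"
    using assms(3) by (intro prod_pos) simp
  ultimately show "0 < p \<alpha> * (\<Prod>i<n. K i ^ \<alpha> i)"
    by simp
  show "0 \<le> p \<beta> * (\<Prod>i<n. K i ^ \<beta> i)" for \<beta>
    using assms(2,3) by (intro mult_nonneg_nonneg prod_nonneg) (simp_all add: less_imp_le)
qed (use assms(1,4) in auto)

lemma card_substitute_support:
  assumes "finite (mon_support p)"
  shows "card {(a, b). a + b \<le> E \<and> substitute n U V K p a b \<noteq> 0} \<le> card (mon_support p)"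
proof -
  have "{(a, b). a + b \<le> E \<and> substitute n U V K p a b \<noteq> 0}
      \<subseteq> (\<lambda>\<alpha>. (weighted_deg n U \<alpha>, weighted_deg n V \<alpha>)) ` mon_support p"
    unfolding substitute_def by (force elim: sum.not_neutral_contains_not_neutral)
  then have "card {(a, b). a + b \<le> E \<and> substitute n U V K p a b \<noteq> 0}
      \<le> card ((\<lambda>\<alpha>. (weighted_deg n U \<alpha>, weighted_deg n V \<alpha>)) ` mon_support p)"
    using assms by (intro card_mono) simp_all
  also have "\<dots> \<le> card (mon_support p)"
    by (rule card_image_le[OF assms])
  finally show ?thesis .
qed

lemma sum_substitute:
  assumes "finite (mon_support p)"
    and deg: "\<forall>\<alpha>\<in>mon_support p. weighted_deg n U \<alpha> + weighted_deg n V \<alpha> \<le> E"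
  shows "(\<Sum>(a, b) | a + b \<le> E. substitute n U V K p a b * x ^ a * (1 - x) ^ b)
    = poly_eval n p (\<lambda>i. K i * x ^ U i * (1 - x) ^ V i)"
proof -
  define g where "g \<alpha> = (weighted_deg n U \<alpha>, weighted_deg n V \<alpha>)" for \<alpha>
  define h where "h \<alpha> = p \<alpha> * (\<Prod>i<n. K i ^ \<alpha> i) * x ^ weighted_deg n U \<alpha> * (1 - x) ^ weighted_deg n V \<alpha>"
    for \<alpha>
  have "substitute n U V K p a b * x ^ a * (1 - x) ^ b = (\<Sum>\<alpha> | \<alpha> \<in> mon_support p \<and> g \<alpha> = (a, b). h \<alpha>)"
    for a b
    unfolding substitute_def g_def h_def sum_distrib_right by (rule sum.cong) auto
  then have "(\<Sum>(a, b) | a + b \<le> E. substitute n U V K p a b * x ^ a * (1 - x) ^ b)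
      = (\<Sum>y \<in> {(a, b). a + b \<le> E}. \<Sum>\<alpha> | \<alpha> \<in> mon_support p \<and> g \<alpha> = y. h \<alpha>)"
    by (simp add: case_prod_beta)
  also have "\<dots> = (\<Sum>\<alpha>\<in>mon_support p. h \<alpha>)"
  proof (rule sum.group)
    show "finite {(a, b). a + b \<le> (E::nat)}"
      by (rule finite_subset[of _ "{..E} \<times> {..E}"]) auto
    show "g ` mon_support p \<subseteq> {(a, b). a + b \<le> E}"
      using deg unfolding g_def by auto
  qed (rule assms(1))
  also have "\<dots> = poly_eval n p (\<lambda>i. K i * x ^ U i * (1 - x) ^ V i)"
    unfolding poly_eval_def h_def weighted_deg_def
    by (simp add: power_mult_distrib prod.distrib power_sum mult_ac flip: power_mult)
  finally show ?thesis .
qed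

lemma weighted_deg_add_le:
  assumes "\<forall>i<n. U i + V i \<le> D"
  shows "weighted_deg n U \<alpha> + weighted_deg n V \<alpha> \<le> D * mon_deg n \<alpha>"
proof -
  have "weighted_deg n U \<alpha> + weighted_deg n V \<alpha> = (\<Sum>i<n. \<alpha> i * (U i + V i))"
    unfolding weighted_deg_def by (simp add: sum.distrib algebra_simps)
  also have "\<dots> \<le> (\<Sum>i<n. \<alpha> i * D)"
    using assms by (intro sum_mono) simp
  also have "\<dots> = D * mon_deg n \<alpha>"
    unfolding mon_deg_def by (simp add: sum_distrib_left mult.commute)
  finally show ?thesis .
qed

lemma substitute_unit_on_line:
  assumes p: "p \<in> Hcal n d" and family: "partition_of_unity n D U V K"
    and "\<alpha>\<^sub>0 \<in> mon_support p" "weighted_deg n U \<alpha>\<^sub>0 + weighted_deg n V \<alpha>\<^sub>0 = D * d"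
  shows "unit_on_line (substitute n U V K p) (D * d)"
proof
  have fin: "finite (mon_support p)" and nonneg: "\<forall>\<alpha>. 0 \<le> p \<alpha>"
    and deg: "\<forall>\<alpha>\<in>mon_support p. mon_deg n \<alpha> \<le> d"
    and eval: "\<And>y. (\<Sum>j<n. y j) = 1 \<Longrightarrow> poly_eval n p y = 1"
    using p unfolding Hcal_def is_poly_def total_degree_eq_def by auto
  have K: "\<forall>i<n. 0 < K i" and UV: "\<forall>i<n. U i + V i \<le> D"
    and sum_1: "\<And>x. (\<Sum>i<n. K i * x ^ U i * (1 - x) ^ V i) = 1"
    using family unfolding partition_of_unity_def by auto
  show "0 \<le> substitute n U V K p a b" for a b
    using nonneg K by (intro substitute_nonneg) (simp_all add: less_imp_le)
  show "\<exists>a\<le>D * d. substitute n U V K p a (D * d - a) \<noteq> 0"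
  proof (intro exI conjI)
    have "D * d - weighted_deg n U \<alpha>\<^sub>0 = weighted_deg n V \<alpha>\<^sub>0"
      using assms(4) by simp
    then show "substitute n U V K p (weighted_deg n U \<alpha>\<^sub>0) (D * d - weighted_deg n U \<alpha>\<^sub>0) \<noteq> 0"
      using substitute_pos[OF fin nonneg K assms(3), of U V] by simp
  qed (use assms(4) in simp)
  have "\<forall>\<alpha>\<in>mon_support p. weighted_deg n U \<alpha> + weighted_deg n V \<alpha> \<le> D * d"
    using weighted_deg_add_le[OF UV] deg by (meson le_trans mult_le_mono2)
  then show "(\<Sum>(a, b) | a + b \<le> D * d. substitute n U V K p a b * x ^ a * (1 - x) ^ b) = 1" for x
    using sum_substitute[OF fin] eval sum_1 by simp
qed

lemma two_variable_support:
  fixes \<alpha> :: "nat \<Rightarrow> nat"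
  assumes "2 \<le> n" "\<forall>i\<ge>n. \<alpha> i = 0" "card {i. \<alpha> i \<noteq> 0} \<le> 2"
  obtains i0 j0 where "i0 < n" "j0 < n" "i0 \<noteq> j0" "\<forall>i. i \<noteq> i0 \<and> i \<noteq> j0 \<longrightarrow> \<alpha> i = 0"
proof -
  have "{i. \<alpha> i \<noteq> 0} \<subseteq> {..<n}"
  proof
    fix i assume "i \<in> {i. \<alpha> i \<noteq> 0}"
    then show "i \<in> {..<n}"
      using assms(2) by (cases "i < n") auto
  qed
  then obtain B where "{i. \<alpha> i \<noteq> 0} \<subseteq> B" "B \<subseteq> {..<n}" "card B = 2"
    using exists_subset_between[of "{i. \<alpha> i \<noteq> 0}" 2 "{..<n}"] assms(1,3) by auto
  then obtain i0 j0 where "B = {i0, j0}" "i0 \<noteq> j0"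
    by (auto simp: card_2_iff)
  then show ?thesis
    using that[of i0 j0] \<open>{i. \<alpha> i \<noteq> 0} \<subseteq> B\<close> \<open>B \<subseteq> {..<n}\<close> by blast
qed

lemma sum_two_support:
  fixes g :: "nat \<Rightarrow> 'a::comm_monoid_add"
  assumes "i0 < n" "j0 < n" "i0 \<noteq> j0" "\<forall>i. i \<noteq> i0 \<and> i \<noteq> j0 \<longrightarrow> g i = 0"
  shows "(\<Sum>i<n. g i) = g i0 + g j0"
proof -
  have "(\<Sum>i<n. g i) = (\<Sum>i\<in>{i0, j0}. g i)"
    by (rule sum.mono_neutral_right) (use assms in auto)
  then show ?thesis
    using assms(3) by simp
qed

lemma partition_of_unity_for_monomial:
  fixes \<alpha> :: "nat \<Rightarrow> nat"
  assumes "2 \<le> n" "\<forall>i\<ge>n. \<alpha> i = 0" "card {i. \<alpha> i \<noteq> 0} \<le> 2"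
  obtains U V K where "partition_of_unity n (2 * n - 3) U V K"
    "weighted_deg n U \<alpha> + weighted_deg n V \<alpha> = (2 * n - 3) * mon_deg n \<alpha>"
proof -
  obtain i0 j0 where ij: "i0 < n" "j0 < n" "i0 \<noteq> j0" "\<forall>i. i \<noteq> i0 \<and> i \<noteq> j0 \<longrightarrow> \<alpha> i = 0"
    using two_variable_support[OF assms] .
  obtain U V K where "partition_of_unity n (2 * n - 3) U V K"
    and "U i0 = 2 * n - 3" "V i0 = 0" "U j0 = 0" "V j0 = 2 * n - 3"
    using partition_of_unity_extremes[OF assms(1) ij(1-3)] by blast
  moreover from this have "weighted_deg n U \<alpha> + weighted_deg n V \<alpha> = (2 * n - 3) * mon_deg n \<alpha>"
    using ij unfolding weighted_deg_def mon_deg_def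
    by (simp add: sum_two_support[OF ij(1-3)] algebra_simps)
  ultimately show ?thesis
    using that by blast
qed

theorem lemma4:
  fixes n d :: nat and p :: "(nat \<Rightarrow> nat) \<Rightarrow> real"
  assumes "n \<ge> 2" and "d \<ge> 1" and "p \<in> Hcal n d"
    and "\<exists>\<alpha>\<in>mon_support p. mon_deg n \<alpha> = d \<and> card {i. \<alpha> i \<noteq> 0} \<le> 2"
  shows "real d \<le> (2 * real (num_monomials p) - 3) / (2 * real n - 3)"
proof -
  define D where "D = 2 * n - 3"
  obtain \<alpha>\<^sub>0 where \<alpha>\<^sub>0: "\<alpha>\<^sub>0 \<in> mon_support p" "mon_deg n \<alpha>\<^sub>0 = d" "card {i. \<alpha>\<^sub>0 i \<noteq> 0} \<le> 2"
    using assms(4) by blast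
  have "finite (mon_support p)" "\<forall>i\<ge>n. \<alpha>\<^sub>0 i = 0"
    using assms(3) \<alpha>\<^sub>0(1) unfolding Hcal_def is_poly_def by auto
  then obtain U V K where family: "partition_of_unity n D U V K"
    and "weighted_deg n U \<alpha>\<^sub>0 + weighted_deg n V \<alpha>\<^sub>0 = D * d"
    using partition_of_unity_for_monomial[OF assms(1) _ \<alpha>\<^sub>0(3)] \<alpha>\<^sub>0(2) unfolding D_def by metis
  then interpret unit_on_line "substitute n U V K p" "D * d"
    using substitute_unit_on_line[OF assms(3) family \<alpha>\<^sub>0(1)] by simp
  have "D * d + 3 \<le> 2 * card {(a, b). a + b \<le> D * d \<and> substitute n U V K p a b \<noteq> 0}"
    using monomial_count assms(1,2) unfolding D_def by simp
  also have "\<dots> \<le> 2 * num_monomials p"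
    using card_substitute_support[OF \<open>finite (mon_support p)\<close>] unfolding num_monomials_def by simp
  finally have "real (D * d + 3) \<le> real (2 * num_monomials p)"
    by (simp only: of_nat_le_iff)
  then have "real D * real d + 3 \<le> 2 * real (num_monomials p)"
    by simp
  moreover have "real D = 2 * real n - 3" "0 < 2 * real n - 3"
    using assms(1) unfolding D_def by (simp_all add: of_nat_diff)
  ultimately show ?thesis
    by (simp add: pos_le_divide_eq algebra_simps)
qed

end
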